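(* Let $\mathfrak a$ be a finite-dimensional real Euclidean vector space, let $\Delta\subset\mathfrak a^*$ be a reduced root system (i.e. $2\alpha\notin\Delta$ for all $\alpha\in\Delta$) with a chosen set of positive roots $\Delta^+$, and let $m:\Delta\to\mathbb R$, $\alpha\mapsto m_\alpha$, be a Weyl-group-invariant multiplicity function such that $m_\alpha\in 2\mathbb N$ for all $\alpha\in\Delta$. Put $\rho:=\frac12\sum_{\alpha\in\Delta^+}m_\alpha\alpha$ and $\rho_\alpha:=\langle\rho,\alpha\rangle/\langle\alpha,\alpha\rangle$. Then $\rho_\alpha\ge m_\alpha/2$ for every $\alpha\in\Delta^+$.
   Context: $\langle\cdot,\cdot\rangle$ denotes the inner product of $\mathfrak a$ transferred to $\mathfrak a^*$. *)

theory Defs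
  imports "HOL-Analysis.Analysis"
begin

text \<open>We identify the dual space with the Euclidean space itself via the inner product.\<close>

definition root_reflection :: "'a::real_inner \<Rightarrow> 'a \<Rightarrow> 'a" where
  "root_reflection \<alpha> x = x - (2 * (x \<bullet> \<alpha>) / (\<alpha> \<bullet> \<alpha>)) *\<^sub>R \<alpha>"

text \<open>A (crystallographic, possibly non-reduced) root system, not required to span.\<close>
definition root_system :: "'a::euclidean_space set \<Rightarrow> bool" where
  "root_system R \<longleftrightarrow> finite R \<and> 0 \<notin> R \<and>
     (\<forall>\<alpha>\<in>R. root_reflection \<alpha> ` R = R) \<and>
     (\<forall>\<alpha>\<in>R. \<forall>\<beta>\<in>R. 2 * (\<beta> \<bullet> \<alpha>) / (\<alpha> \<bullet> \<alpha>) \<in> \<int>)"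

definition reduced_root_system :: "'a::euclidean_space set \<Rightarrow> bool" where
  "reduced_root_system R \<longleftrightarrow> root_system R \<and> (\<forall>\<alpha>\<in>R. 2 *\<^sub>R \<alpha> \<notin> R)"

definition positive_system :: "'a::euclidean_space set \<Rightarrow> 'a set \<Rightarrow> bool" where
  "positive_system R P \<longleftrightarrow>
     (\<exists>H. (\<forall>\<alpha>\<in>R. \<alpha> \<bullet> H \<noteq> 0) \<and> P = {\<alpha>\<in>R. \<alpha> \<bullet> H > 0})"

inductive_set weyl_group :: "'a::euclidean_space set \<Rightarrow> ('a \<Rightarrow> 'a) set" for R where
  weyl_id: "id \<in> weyl_group R"
| weyl_step: "w \<in> weyl_group R \<Longrightarrow> \<alpha> \<in> R \<Longrightarrow> root_reflection \<alpha> \<circ> w \<in> weyl_group R"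

definition weyl_invariant :: "'a::euclidean_space set \<Rightarrow> ('a \<Rightarrow> real) \<Rightarrow> bool" where
  "weyl_invariant R m \<longleftrightarrow> (\<forall>w\<in>weyl_group R. \<forall>\<alpha>\<in>R. m (w \<alpha>) = m \<alpha>)"

definition rho :: "'a::euclidean_space set \<Rightarrow> ('a \<Rightarrow> real) \<Rightarrow> 'a" where
  "rho P m = (1/2) *\<^sub>R (\<Sum>\<alpha>\<in>P. m \<alpha> *\<^sub>R \<alpha>)"

end

theory Submission
  imports Defs
begin

text \<open>
  Write \<open>2 \<langle>\<rho>, \<alpha>\<rangle> = m\<^sub>\<alpha> \<langle>\<alpha>, \<alpha>\<rangle> + \<Sum>\<^sub>\<beta> m\<^sub>\<beta> \<langle>\<beta>, \<alpha>\<rangle>\<close>, the sum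
  running over the positive roots \<open>\<beta> \<noteq> \<alpha>\<close>. The reflection \<open>s\<^sub>\<alpha>\<close> maps every
  positive root \<open>\<beta>\<close> with \<open>\<langle>\<beta>, \<alpha>\<rangle> < 0\<close> injectively to a positive root
  \<open>\<noteq> \<alpha>\<close> with \<open>\<langle>s\<^sub>\<alpha>\<beta>, \<alpha>\<rangle> = -\<langle>\<beta>, \<alpha>\<rangle>\<close> and the same multiplicity, so every
  negative term of the sum is cancelled by a positive one. Since the multiplicities are
  nonnegative, the sum is \<open>\<ge> 0\<close>.
\<close>

lemma inner_root_reflection_left:
  assumes "\<alpha> \<noteq> 0"
  shows "root_reflection \<alpha> x \<bullet> \<alpha> = - (x \<bullet> \<alpha>)"
  using assms by (simp add: root_reflection_def inner_diff_left)

lemma root_reflection_root_reflection: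
  assumes "\<alpha> \<noteq> 0"
  shows "root_reflection \<alpha> (root_reflection \<alpha> x) = x"
proof -
  have "root_reflection \<alpha> (root_reflection \<alpha> x)
      = root_reflection \<alpha> x + (2 * (x \<bullet> \<alpha>) / (\<alpha> \<bullet> \<alpha>)) *\<^sub>R \<alpha>"
    using inner_root_reflection_left[OF assms, of x] by (simp add: root_reflection_def)
  then show ?thesis
    by (simp add: root_reflection_def)
qed

lemma root_reflection_self:
  assumes "\<alpha> \<noteq> 0"
  shows "root_reflection \<alpha> \<alpha> = - \<alpha>"
  using assms by (simp add: root_reflection_def scaleR_2)

lemma inj_root_reflection:
  assumes "\<alpha> \<noteq> 0"
  shows "inj (root_reflection \<alpha>)"
  by (metis assms injI root_reflection_root_reflection)

lemma root_reflection_in_weyl_group: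
  assumes "\<alpha> \<in> R"
  shows "root_reflection \<alpha> \<in> weyl_group R"
  using weyl_step[OF weyl_id assms] by simp

lemma weyl_invariant_root_reflection:
  assumes "weyl_invariant R m" and "\<alpha> \<in> R" and "\<beta> \<in> R"
  shows "m (root_reflection \<alpha> \<beta>) = m \<beta>"
  using assms root_reflection_in_weyl_group unfolding weyl_invariant_def by blast

lemma positive_system_subset:
  "positive_system R P \<Longrightarrow> P \<subseteq> R"
  by (auto simp: positive_system_def)

lemma root_reflection_obtuse_positive_root:
  assumes R: "root_system R" and P: "positive_system R P"
    and "\<alpha> \<in> P" and "\<beta> \<in> P" and obtuse: "\<beta> \<bullet> \<alpha> < 0"
  shows "root_reflection \<alpha> \<beta> \<in> P - {\<alpha>}"
proof -
  obtain H where P_def: "P = {\<gamma>\<in>R. \<gamma> \<bullet> H > 0}"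
    using P by (auto simp: positive_system_def)
  have "\<alpha> \<in> R" "\<beta> \<in> R" "\<alpha> \<bullet> H > 0" "\<beta> \<bullet> H > 0"
    using \<open>\<alpha> \<in> P\<close> \<open>\<beta> \<in> P\<close> by (auto simp: P_def)
  have "\<alpha> \<noteq> 0"
    using R \<open>\<alpha> \<in> R\<close> by (auto simp: root_system_def)
  have "root_reflection \<alpha> \<beta> \<in> R"
    using R \<open>\<alpha> \<in> R\<close> \<open>\<beta> \<in> R\<close> unfolding root_system_def by blast
  have "(2 * (\<beta> \<bullet> \<alpha>) / (\<alpha> \<bullet> \<alpha>)) * (\<alpha> \<bullet> H) < 0"
    using obtuse \<open>\<alpha> \<noteq> 0\<close> \<open>\<alpha> \<bullet> H > 0\<close> by (simp add: mult_neg_pos divide_neg_pos)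
  then have "root_reflection \<alpha> \<beta> \<bullet> H > 0"
    using \<open>\<beta> \<bullet> H > 0\<close> by (simp add: root_reflection_def inner_diff_left)
  moreover have "root_reflection \<alpha> \<beta> \<noteq> \<alpha>"
  proof
    assume "root_reflection \<alpha> \<beta> = \<alpha>"
    then have "\<beta> = - \<alpha>"
      by (metis \<open>\<alpha> \<noteq> 0\<close> root_reflection_root_reflection root_reflection_self)
    then show False
      using \<open>\<alpha> \<bullet> H > 0\<close> \<open>\<beta> \<bullet> H > 0\<close> by simp
  qed
  ultimately show ?thesis
    using \<open>root_reflection \<alpha> \<beta> \<in> R\<close> by (simp add: P_def)
qed

lemma sum_other_positive_roots_inner_nonneg:
  assumes R: "root_system R" and P: "positive_system R P" and "\<alpha> \<in> P"
    and m_nonneg: "\<And>\<beta>. \<beta> \<in> R \<Longrightarrow> m \<beta> \<ge> 0"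
    and m_reflection: "\<And>\<beta>. \<beta> \<in> R \<Longrightarrow> m (root_reflection \<alpha> \<beta>) = m \<beta>"
  shows "(\<Sum>\<beta>\<in>P - {\<alpha>}. m \<beta> * (\<beta> \<bullet> \<alpha>)) \<ge> 0"
proof -
  define f where "f \<beta> = m \<beta> * (\<beta> \<bullet> \<alpha>)" for \<beta>
  define s where "s = root_reflection \<alpha>"
  define N where "N = {\<beta>\<in>P. \<beta> \<bullet> \<alpha> < 0}"
  define Q where "Q = {\<beta>\<in>P - {\<alpha>}. \<beta> \<bullet> \<alpha> \<ge> 0}"
  have "P \<subseteq> R"
    using P by (rule positive_system_subset)
  have "finite P"
    using R \<open>P \<subseteq> R\<close> finite_subset by (auto simp: root_system_def)
  have "\<alpha> \<noteq> 0"
    using R \<open>\<alpha> \<in> P\<close> \<open>P \<subseteq> R\<close> by (auto simp: root_system_def)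
  have "\<not> \<alpha> \<bullet> \<alpha> < 0"
    using inner_ge_zero[of \<alpha>] by linarith
  then have "P - {\<alpha>} = N \<union> Q"
    unfolding N_def Q_def by force
  moreover have "N \<inter> Q = {}" and "finite N" and "finite Q"
    using \<open>finite P\<close> unfolding N_def Q_def by auto
  ultimately have "(\<Sum>\<beta>\<in>P - {\<alpha>}. f \<beta>) = sum f N + sum f Q"
    by (simp add: sum.union_disjoint)
  moreover have "sum f (s ` N) = - sum f N"
  proof -
    have "sum f (s ` N) = sum (f \<circ> s) N"
      using inj_root_reflection[OF \<open>\<alpha> \<noteq> 0\<close>] by (simp add: s_def sum.reindex inj_on_subset)
    also have "\<dots> = sum (\<lambda>\<beta>. - f \<beta>) N"
      using \<open>P \<subseteq> R\<close> \<open>\<alpha> \<noteq> 0\<close>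
      by (intro sum.cong) (auto simp: N_def f_def s_def m_reflection inner_root_reflection_left)
    finally show ?thesis
      by (simp add: sum_negf)
  qed
  moreover have "sum f (s ` N) \<le> sum f Q"
  proof (rule sum_mono2)
    show "finite Q"
      by fact
    show "s ` N \<subseteq> Q"
      using root_reflection_obtuse_positive_root[OF R P \<open>\<alpha> \<in> P\<close>] \<open>\<alpha> \<noteq> 0\<close>
      by (auto simp: N_def Q_def s_def inner_root_reflection_left)
    show "0 \<le> f \<beta>" if "\<beta> \<in> Q - s ` N" for \<beta>
      using that \<open>P \<subseteq> R\<close> m_nonneg by (auto simp: Q_def f_def)
  qed
  ultimately show ?thesis
    by (simp add: f_def)
qed

theorem lemma1p1:
  fixes R P :: "'a::euclidean_space set" and m :: "'a \<Rightarrow> real"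
  assumes "reduced_root_system R"
    and "positive_system R P"
    and "weyl_invariant R m"
    and "\<forall>\<alpha>\<in>R. \<exists>n::nat. m \<alpha> = 2 * real n"
  shows "\<forall>\<alpha>\<in>P. (rho P m \<bullet> \<alpha>) / (\<alpha> \<bullet> \<alpha>) \<ge> m \<alpha> / 2"
proof
  fix \<alpha> assume "\<alpha> \<in> P"
  have R: "root_system R"
    using assms(1) by (simp add: reduced_root_system_def)
  have "P \<subseteq> R"
    using assms(2) by (rule positive_system_subset)
  then have "finite P" and "\<alpha> \<bullet> \<alpha> > 0"
    using R \<open>\<alpha> \<in> P\<close> finite_subset by (auto simp: root_system_def)
  have "m \<beta> \<ge> 0" if "\<beta> \<in> R" for \<beta>
    using assms(4) that by fastforce
  then have "(\<Sum>\<beta>\<in>P - {\<alpha>}. m \<beta> * (\<beta> \<bullet> \<alpha>)) \<ge> 0"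
    using sum_other_positive_roots_inner_nonneg[OF R assms(2) \<open>\<alpha> \<in> P\<close>]
      weyl_invariant_root_reflection[OF assms(3)] \<open>\<alpha> \<in> P\<close> \<open>P \<subseteq> R\<close> by blast
  moreover have "rho P m \<bullet> \<alpha> = (m \<alpha> * (\<alpha> \<bullet> \<alpha>) + (\<Sum>\<beta>\<in>P - {\<alpha>}. m \<beta> * (\<beta> \<bullet> \<alpha>))) / 2"
    using \<open>finite P\<close> \<open>\<alpha> \<in> P\<close> by (simp add: rho_def inner_sum_left sum.remove inner_add_left)
  ultimately show "(rho P m \<bullet> \<alpha>) / (\<alpha> \<bullet> \<alpha>) \<ge> m \<alpha> / 2"
    using \<open>\<alpha> \<bullet> \<alpha> > 0\<close> by (simp add: field_simps)
qed

end
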